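(* Let $W_1,\dots,W_m\in\mathbb{R}^{n\times n}$ be eventually doubly stochastic signed adjacency matrices, and let $Q\in\mathbb{R}^{(n-1)\times n}$ satisfy $QQ^\top=I_{n-1}$, $Q\mathbf{1}=0$. If there exists a symmetric positive definite $P\in\mathbb{R}^{n\times n}$ such that \[ QW_k^\top PW_kQ^\top-QPQ^\top\prec0\quad\text{for all }k=1,\dots,m, \] then $\{W_1,\dots,W_m\}$ is a consensus set for the switched system $\mathbf{x}(t+1)=W_{\sigma(t)}\mathbf{x}(t)$.
   Context: $W_k$ are real matrices (entries of any sign). $W$ is eventually positive if there is $t_0\in\mathbb{Z}_{\ge0}$ with $W^t$ entrywise positive for all integers $t\ge t_0$; eventually doubly stochastic means eventually positive with $W\mathbf{1}=W^\top\mathbf{1}=\mathbf{1}$. $X\prec0$ means symmetric negative definite. A switching signal is any map $\sigma:\mathbb{Z}_{\ge0}\to\{1,\dots,m\}$; a consensus set is one for which, for every switching signal and every $\mathbf{x}(0)$, $\mathbf{x}(t)\to\alpha\mathbf{1}$ for some $\alpha\in\mathbb{R}$. *)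

theory Defs
  imports "HOL-Analysis.Analysis"
begin

primrec matpow :: "real^'n^'n \<Rightarrow> nat \<Rightarrow> real^'n^'n" where
  "matpow A 0 = mat 1"
| "matpow A (Suc k) = A ** matpow A k"

definition ones :: "real^'n" where "ones = (\<chi> i. 1)"

definition eventually_positive :: "real^'n^'n \<Rightarrow> bool" where
  "eventually_positive W \<longleftrightarrow>
     (\<exists>t0::nat. \<forall>t\<ge>t0. \<forall>i j. (matpow W t) $ i $ j > 0)"

definition eventually_doubly_stochastic :: "real^'n^'n \<Rightarrow> bool" where
  "eventually_doubly_stochastic W \<longleftrightarrow>
     eventually_positive W \<and> W *v ones = ones \<and> transpose W *v ones = ones"

definition pos_def :: "real^'n^'n \<Rightarrow> bool" where
  "pos_def A \<longleftrightarrow> transpose A = A \<and> (\<forall>x. x \<noteq> 0 \<longrightarrow> x \<bullet> (A *v x) > 0)"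

definition neg_def :: "real^'n^'n \<Rightarrow> bool" where
  "neg_def A \<longleftrightarrow> transpose A = A \<and> (\<forall>x. x \<noteq> 0 \<longrightarrow> x \<bullet> (A *v x) < 0)"

primrec traj :: "(nat \<Rightarrow> real^'n^'n) \<Rightarrow> (nat \<Rightarrow> nat) \<Rightarrow> real^'n \<Rightarrow> nat \<Rightarrow> real^'n" where
  "traj W \<sigma> x0 0 = x0"
| "traj W \<sigma> x0 (Suc t) = W (\<sigma> t) *v traj W \<sigma> x0 t"

definition consensus_set :: "(nat \<Rightarrow> real^'n^'n) \<Rightarrow> nat \<Rightarrow> bool" where
  "consensus_set W m \<longleftrightarrow>
     (\<forall>\<sigma>::nat \<Rightarrow> nat. (\<forall>t. \<sigma> t \<in> {1..m}) \<longrightarrow>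
        (\<forall>x0. \<exists>\<alpha>::real. traj W \<sigma> x0 \<longlonglongrightarrow> \<alpha> *\<^sub>R ones))"

end

theory Submission imports Defs begin

text \<open>Since every \<open>W k\<close> has unit row and column sums, the average \<open>c\<close> of the state is invariant
  and the disagreement \<open>e(t) = x(t) - c \<one>\<close> stays in the hyperplane \<open>\<one>\<^sup>\<bottom>\<close> and obeys
  \<open>e(t+1) = W(\<sigma> t) e(t)\<close>. As the rows of \<open>Q\<close> form an orthonormal basis of \<open>\<one>\<^sup>\<bottom>\<close>, the LMI says
  precisely that \<open>V(u) = u\<^sup>T P u\<close> strictly decreases along every \<open>W k\<close> on \<open>\<one>\<^sup>\<bottom>\<close>. By homogeneity
  and compactness of the unit sphere this decrease is a uniform contraction \<open>V(W k u) \<le> \<rho> V(u)\<close>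
  with \<open>\<rho> < 1\<close>, common to the finitely many \<open>W k\<close>; hence \<open>V(e(t)) \<le> \<rho>\<^sup>t V(e(0))\<close> under any
  switching, and \<open>e(t) \<rightarrow> 0\<close> because \<open>V\<close> dominates a multiple of \<open>\<parallel>u\<parallel>\<^sup>2\<close>.\<close>

definition quad_form :: "real^'n^'n \<Rightarrow> real^'n \<Rightarrow> real" where
  "quad_form P u = u \<bullet> (P *v u)"

lemma inner_matrix_vector_transpose:
  "(x::real^'m) \<bullet> ((A::real^'n^'m) *v y) = (transpose A *v x) \<bullet> y"
  by (simp add: dot_lmul_matrix)

lemma quad_form_scaleR: "quad_form P (c *\<^sub>R u) = c\<^sup>2 * quad_form P u"
  by (simp add: quad_form_def matrix_vector_mult_scaleR power2_eq_square)

lemma scaleR_norm_sgn: "norm u *\<^sub>R sgn u = u"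
  by (cases "u = 0") (simp_all add: sgn_div_norm)

lemma quad_form_sgn: "quad_form P u = (norm u)\<^sup>2 * quad_form P (sgn u)"
  by (metis scaleR_norm_sgn quad_form_scaleR)

lemma quad_form_matrix_sgn:
  "quad_form P (A *v u) = (norm u)\<^sup>2 * quad_form P (A *v sgn u)"
  by (metis scaleR_norm_sgn quad_form_scaleR matrix_vector_mult_scaleR)

lemma continuous_on_quad_form_matrix:
  "continuous_on S (\<lambda>u. quad_form P ((A::real^'n^'n) *v u))"
proof -
  have linear: "\<And>B::real^'n^'n. continuous_on UNIV (\<lambda>u. B *v u)"
    by (intro linear_continuous_on matrix_vector_mul_bounded_linear)
  have "continuous_on UNIV (\<lambda>u. quad_form P (A *v u))"
    unfolding quad_form_def
    by (intro continuous_on_inner linear continuous_on_compose2[OF linear linear]) auto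
  then show ?thesis by (rule continuous_on_subset) simp
qed

lemma pos_def_quad_form_pos: "pos_def P \<Longrightarrow> u \<noteq> 0 \<Longrightarrow> quad_form P u > 0"
  by (simp add: pos_def_def quad_form_def)

lemma pos_def_quad_form_nonneg: "pos_def P \<Longrightarrow> quad_form P u \<ge> 0"
  by (cases "u = 0") (auto simp: quad_form_def dest: pos_def_quad_form_pos)

lemma pos_def_quad_form_coercive:
  fixes P :: "real^'n^'n"
  assumes "pos_def P"
  obtains c where "c > 0" "\<And>u. c * (norm u)\<^sup>2 \<le> quad_form P u"
proof -
  have unit: "axis undefined 1 \<in> sphere (0::real^'n) 1" by simp
  have "continuous_on (sphere 0 1) (quad_form P)"
    using continuous_on_quad_form_matrix[of _ P "mat 1"] by simp
  then obtain v0 where v0: "v0 \<in> sphere 0 1" and min: "\<forall>v\<in>sphere 0 1. quad_form P v0 \<le> quad_form P v"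
    using continuous_attains_inf[OF compact_sphere] unit by blast
  have "quad_form P v0 > 0" using v0 assms by (auto intro: pos_def_quad_form_pos)
  moreover have "quad_form P v0 * (norm u)\<^sup>2 \<le> quad_form P u" for u
  proof (cases "u = 0")
    case False
    then have "quad_form P v0 \<le> quad_form P (sgn u)" using min by (simp add: norm_sgn)
    then have "(norm u)\<^sup>2 * quad_form P v0 \<le> (norm u)\<^sup>2 * quad_form P (sgn u)"
      by (simp add: mult_left_mono)
    then show ?thesis by (metis quad_form_sgn mult.commute)
  qed (simp add: quad_form_def)
  ultimately show thesis by (rule that)
qed

lemma quad_form_contraction_on_subspace:
  fixes P A :: "real^'n^'n"
  assumes P: "pos_def P" and S: "subspace S"
    and decrease: "\<And>u. u \<in> S \<Longrightarrow> u \<noteq> 0 \<Longrightarrow> quad_form P (A *v u) < quad_form P u"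
  obtains \<rho> where "\<rho> < 1" "\<And>u. u \<in> S \<Longrightarrow> quad_form P (A *v u) \<le> \<rho> * quad_form P u"
proof -
  define T where "T = sphere 0 1 \<inter> S"
  define ratio where "ratio v = quad_form P (A *v v) / quad_form P v" for v
  have "\<exists>\<rho>\<^sub>0<1. \<forall>v\<in>T. ratio v \<le> \<rho>\<^sub>0"
  proof (cases "T = {}")
    case False
    have "compact T" unfolding T_def using S by (intro compact_Int_closed compact_sphere closed_subspace)
    moreover have "\<forall>v\<in>T. quad_form P v \<noteq> 0"
      using pos_def_quad_form_pos[OF P] unfolding T_def
      by (metis IntD1 less_irrefl mem_sphere_0 norm_zero zero_neq_one)
    then have "continuous_on T ratio"
      unfolding ratio_def
      by (intro continuous_on_divide continuous_on_quad_form_matrix[of _ P A]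
          continuous_on_quad_form_matrix[of _ P "mat 1", simplified])
    ultimately obtain v0 where v0: "v0 \<in> T" "\<forall>v\<in>T. ratio v \<le> ratio v0"
      using continuous_attains_sup False by blast
    have "v0 \<in> S" "v0 \<noteq> 0" using v0(1) by (auto simp: T_def)
    then have "ratio v0 < 1"
      using decrease pos_def_quad_form_pos[OF P] by (simp add: ratio_def divide_less_eq)
    then show ?thesis using v0(2) by blast
  qed (auto intro: exI[of _ 0])
  then obtain \<rho> where "\<rho> < 1" and ratio_le: "\<And>v. v \<in> T \<Longrightarrow> ratio v \<le> \<rho>" by blast
  have "quad_form P (A *v u) \<le> \<rho> * quad_form P u" if u: "u \<in> S" for u
  proof (cases "u = 0")
    case False
    have "sgn u \<in> T" using u S False by (simp add: T_def sgn_div_norm norm_sgn subspace_scale)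
    then have "quad_form P (A *v sgn u) \<le> \<rho> * quad_form P (sgn u)"
      using ratio_le[of "sgn u"] pos_def_quad_form_pos[OF P, of "sgn u"] False
      by (simp add: ratio_def divide_le_eq sgn_zero_iff)
    then have "(norm u)\<^sup>2 * quad_form P (A *v sgn u) \<le> (norm u)\<^sup>2 * (\<rho> * quad_form P (sgn u))"
      by (simp add: mult_left_mono)
    then show ?thesis by (metis quad_form_matrix_sgn quad_form_sgn mult.left_commute)
  qed (simp add: quad_form_def)
  with \<open>\<rho> < 1\<close> show thesis by (rule that)
qed

lemma quad_form_common_contraction_on_subspace:
  fixes P :: "real^'n^'n" and A :: "'k \<Rightarrow> real^'n^'n"
  assumes P: "pos_def P" and S: "subspace S" and K: "finite K"
    and decrease: "\<And>k u. k \<in> K \<Longrightarrow> u \<in> S \<Longrightarrow> u \<noteq> 0 \<Longrightarrow> quad_form P (A k *v u) < quad_form P u"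
  obtains \<rho> where "0 \<le> \<rho>" "\<rho> < 1"
    "\<And>k u. k \<in> K \<Longrightarrow> u \<in> S \<Longrightarrow> quad_form P (A k *v u) \<le> \<rho> * quad_form P u"
proof -
  have "\<forall>k\<in>K. \<exists>\<rho>. \<rho> < 1 \<and> (\<forall>u\<in>S. quad_form P (A k *v u) \<le> \<rho> * quad_form P u)"
    using quad_form_contraction_on_subspace[OF P S decrease] by metis
  from bchoice[OF this] obtain r
    where r: "\<forall>k\<in>K. r k < 1 \<and> (\<forall>u\<in>S. quad_form P (A k *v u) \<le> r k * quad_form P u)"
    by blast
  define \<rho> where "\<rho> = Max (insert 0 (r ` K))"
  show thesis
  proof (rule that[of \<rho>])
    show "0 \<le> \<rho>" unfolding \<rho>_def using K by (intro Max_ge) auto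
    show "\<rho> < 1" unfolding \<rho>_def using K r by (subst Max_less_iff) auto
    fix k u assume k: "k \<in> K" and u: "u \<in> S"
    have "r k \<le> \<rho>" unfolding \<rho>_def using K k by (intro Max_ge) auto
    have "quad_form P (A k *v u) \<le> r k * quad_form P u" using r k u by blast
    also have "\<dots> \<le> \<rho> * quad_form P u"
      using \<open>r k \<le> \<rho>\<close> pos_def_quad_form_nonneg[OF P] by (rule mult_right_mono)
    finally show "quad_form P (A k *v u) \<le> \<rho> * quad_form P u" .
  qed
qed

lemma quad_form_geometric_decay_tendsto_zero:
  fixes P :: "real^'n^'n" and x :: "nat \<Rightarrow> real^'n"
  assumes P: "pos_def P" and "0 \<le> \<rho>" "\<rho> < 1"
    and step: "\<And>t. quad_form P (x (Suc t)) \<le> \<rho> * quad_form P (x t)"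
  shows "x \<longlonglongrightarrow> 0"
proof -
  obtain c where c: "c > 0" "\<And>u. c * (norm u)\<^sup>2 \<le> quad_form P u"
    using pos_def_quad_form_coercive[OF P] by blast
  have decay: "quad_form P (x t) \<le> \<rho> ^ t * quad_form P (x 0)" for t
  proof (induction t)
    case (Suc t)
    have "quad_form P (x (Suc t)) \<le> \<rho> * quad_form P (x t)" by (rule step)
    also have "\<dots> \<le> \<rho> * (\<rho> ^ t * quad_form P (x 0))"
      using Suc \<open>0 \<le> \<rho>\<close> by (rule mult_left_mono)
    finally show ?case by simp
  qed simp
  have bound: "norm ((norm (x t))\<^sup>2) \<le> \<rho> ^ t * quad_form P (x 0) / c" for t
  proof -
    have "c * (norm (x t))\<^sup>2 \<le> \<rho> ^ t * quad_form P (x 0)"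
      using c(2)[of "x t"] decay[of t] by linarith
    then show ?thesis using c(1) by (simp add: field_simps)
  qed
  have "(\<lambda>t. \<rho> ^ t * quad_form P (x 0) / c) \<longlonglongrightarrow> 0"
    using assms by (intro tendsto_divide_zero tendsto_mult_left_zero LIMSEQ_power_zero) simp
  then have "(\<lambda>t. (norm (x t))\<^sup>2) \<longlonglongrightarrow> 0"
    by (rule Lim_null_comparison[OF always_eventually, rotated]) (use bound in blast)
  then have "(\<lambda>t. sqrt ((norm (x t))\<^sup>2)) \<longlonglongrightarrow> sqrt 0" by (rule tendsto_real_sqrt)
  then show ?thesis by (simp add: tendsto_norm_zero_iff)
qed

lemma inner_ones_ones: "ones \<bullet> (ones::real^'n) = real CARD('n)"
  by (simp add: ones_def inner_vec_def)

lemma inner_rows_orthonormal: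
  fixes Q :: "real^'n^'r"
  assumes "Q ** transpose Q = mat 1"
  shows "Q $ r \<bullet> Q $ s = (if r = s then 1 else 0)"
proof -
  have "(Q ** transpose Q) $ r $ s = row r Q \<bullet> row s Q"
    by (simp add: matrix_mult_transpose_dot_row)
  moreover have "row i Q = Q $ i" for i by (simp add: row_def vec_eq_iff)
  ultimately show ?thesis using assms by (simp add: mat_def)
qed

lemma inner_row_ones:
  fixes Q :: "real^'n^'r"
  assumes "Q *v ones = 0"
  shows "Q $ r \<bullet> ones = 0"
  using assms by (metis matrix_vector_mul_component zero_index)

lemma span_insert_ones_rows:
  fixes Q :: "real^'n^'r"
  assumes dim: "CARD('r) + 1 = CARD('n)" and QQt: "Q ** transpose Q = mat 1" and Q1: "Q *v ones = 0"
  shows "span (insert ones (range (($) Q))) = UNIV"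
proof -
  let ?B = "insert ones (range (($) Q))"
  have unit_rows: "Q $ r \<noteq> 0" "Q $ r \<noteq> ones" for r
    using inner_rows_orthonormal[OF QQt, of r r] inner_row_ones[OF Q1, of r] by auto
  have "inj (($) Q)"
    by (rule injI) (metis inner_rows_orthonormal[OF QQt] zero_neq_one)
  moreover have "ones \<notin> range (($) Q)" using unit_rows(2) by (metis rangeE)
  ultimately have card: "card ?B = CARD('n)"
    using dim by (simp add: card_image)
  have "pairwise orthogonal ?B"
    unfolding pairwise_def orthogonal_def
    using inner_rows_orthonormal[OF QQt] inner_row_ones[OF Q1] by (auto simp: inner_commute)
  moreover have "ones \<noteq> (0::real^'n)" by (simp add: ones_def vec_eq_iff)
  then have "0 \<notin> ?B" using unit_rows(1) by (metis insertE rangeE)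
  ultimately have "independent ?B" by (rule pairwise_orthogonal_independent)
  then have "UNIV \<subseteq> span ?B"
    using card by (intro card_ge_dim_independent) auto
  then show ?thesis by auto
qed

lemma transpose_mult_self_vector_eq:
  fixes Q :: "real^'n^'r"
  assumes dim: "CARD('r) + 1 = CARD('n)" and QQt: "Q ** transpose Q = mat 1" and Q1: "Q *v ones = 0"
    and u: "ones \<bullet> u = 0"
  shows "transpose Q *v (Q *v u) = u"
proof -
  define z where "z = u - transpose Q *v (Q *v u)"
  have "Q *v (transpose Q *v y) = y" for y
    by (simp only: matrix_vector_mul_assoc QQt matrix_vector_mul_lid)
  then have Qz: "Q *v z = 0"
    by (simp add: z_def matrix_vector_mult_diff_distrib del: transpose_matrix_vector)
  have "ones \<bullet> (transpose Q *v (Q *v u)) = 0"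
    by (metis inner_matrix_vector_transpose inner_commute Q1 inner_zero_right)
  then have "ones \<bullet> z = 0" by (simp add: z_def inner_diff_right u)
  with Qz have "orthogonal z y" if "y \<in> insert ones (range (($) Q))" for y
    using that unfolding orthogonal_def
    by (auto simp: inner_commute) (metis inner_commute matrix_vector_mul_component zero_index)
  then have "orthogonal z z"
    using orthogonal_to_span span_insert_ones_rows[OF dim QQt Q1] by blast
  then show ?thesis by (simp add: z_def orthogonal_self del: transpose_matrix_vector)
qed

text \<open>On \<open>ones\<^sup>\<bottom>\<close> every \<open>u\<close> equals \<open>Q\<^sup>T y\<close> with \<open>y = Q u\<close>, so the LMI evaluated at \<open>y\<close> is exactly
  the decrease of \<open>quad_form P\<close> along \<open>A\<close>.\<close>
lemma lmi_quad_form_decrease: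
  fixes Q :: "real^'n^'r" and P A :: "real^'n^'n"
  assumes dim: "CARD('r) + 1 = CARD('n)" and QQt: "Q ** transpose Q = mat 1" and Q1: "Q *v ones = 0"
    and lmi: "neg_def (Q ** transpose A ** P ** A ** transpose Q - Q ** P ** transpose Q)"
    and u: "ones \<bullet> u = 0" "u \<noteq> 0"
  shows "quad_form P (A *v u) < quad_form P u"
proof -
  define y where "y = Q *v u"
  have uy: "u = transpose Q *v y"
    using transpose_mult_self_vector_eq[OF dim QQt Q1 u(1)] by (simp add: y_def del: transpose_matrix_vector)
  then have "y \<noteq> 0" using u(2) by auto
  then have neg: "y \<bullet> ((Q ** transpose A ** P ** A ** transpose Q - Q ** P ** transpose Q) *v y) < 0"
    using lmi unfolding neg_def_def by blast
  have "y \<bullet> ((Q ** transpose A ** P ** A ** transpose Q) *v y) = quad_form P (A *v u)"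
    unfolding quad_form_def
    by (simp only: matrix_vector_mul_assoc[symmetric] inner_matrix_vector_transpose transpose_transpose uy)
  moreover have "y \<bullet> ((Q ** P ** transpose Q) *v y) = quad_form P u"
    unfolding quad_form_def
    by (simp only: matrix_vector_mul_assoc[symmetric] inner_matrix_vector_transpose transpose_transpose uy)
  ultimately show ?thesis
    using neg by (simp add: matrix_vector_mult_diff_rdistrib inner_diff_right)
qed

lemma inner_ones_matrix_vector:
  "transpose A *v ones = ones \<Longrightarrow> ones \<bullet> (A *v x) = ones \<bullet> x"
  by (simp add: inner_matrix_vector_transpose del: transpose_matrix_vector)

lemma consensus_set_if_disagreement_contracts:
  fixes W :: "nat \<Rightarrow> real^'n^'n" and P :: "real^'n^'n"
  assumes P: "pos_def P" and \<rho>: "0 \<le> \<rho>" "\<rho> < 1"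
    and stochastic: "\<And>k. k \<in> {1..m} \<Longrightarrow> W k *v ones = ones \<and> transpose (W k) *v ones = ones"
    and contraction: "\<And>k u. k \<in> {1..m} \<Longrightarrow> ones \<bullet> u = 0 \<Longrightarrow>
      quad_form P (W k *v u) \<le> \<rho> * quad_form P u"
  shows "consensus_set W m"
  unfolding consensus_set_def
proof (intro allI impI)
  fix \<sigma> :: "nat \<Rightarrow> nat" and x0 :: "real^'n"
  assume \<sigma>: "\<forall>t. \<sigma> t \<in> {1..m}"
  define c where "c = (ones \<bullet> x0) / real CARD('n)"
  define e where "e t = traj W \<sigma> x0 t - c *\<^sub>R ones" for t
  have average: "ones \<bullet> traj W \<sigma> x0 t = ones \<bullet> x0" for t
    by (induction t) (use stochastic \<sigma> in \<open>simp_all add: inner_ones_matrix_vector\<close>)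
  have "ones \<bullet> e t = 0" for t
    by (simp add: e_def inner_diff_right average inner_ones_ones c_def)
  moreover have "e (Suc t) = W (\<sigma> t) *v e t" for t
    using stochastic \<sigma> by (simp add: e_def matrix_vector_mult_diff_distrib matrix_vector_mult_scaleR)
  ultimately have "e \<longlonglongrightarrow> 0"
    using \<sigma> by (intro quad_form_geometric_decay_tendsto_zero[OF P \<rho>]) (simp add: contraction)
  then have "(\<lambda>t. e t + c *\<^sub>R ones) \<longlonglongrightarrow> 0 + c *\<^sub>R ones"
    by (intro tendsto_add tendsto_const)
  then show "\<exists>\<alpha>. traj W \<sigma> x0 \<longlonglongrightarrow> \<alpha> *\<^sub>R ones"
    by (intro exI[of _ c]) (simp add: e_def)
qed

theorem theorem10:
  fixes W :: "nat \<Rightarrow> real^'n^'n" and m :: nat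
    and Q :: "real^'n^'r" and P :: "real^'n^'n"
  assumes dim: "CARD('r) + 1 = CARD('n)"
    and eds: "\<forall>k\<in>{1..m}. eventually_doubly_stochastic (W k)"
    and QQt: "Q ** transpose Q = mat 1"
    and Q1: "Q *v ones = 0"
    and P: "pos_def P"
    and lmi: "\<forall>k\<in>{1..m}.
       neg_def (Q ** transpose (W k) ** P ** W k ** transpose Q - Q ** P ** transpose Q)"
  shows "consensus_set W m"
proof -
  have decrease: "\<And>k u. k \<in> {1..m} \<Longrightarrow> u \<in> {u. ones \<bullet> u = 0} \<Longrightarrow> u \<noteq> 0 \<Longrightarrow>
      quad_form P (W k *v u) < quad_form P u"
    using lmi_quad_form_decrease[OF dim QQt Q1] lmi by blast
  obtain \<rho> where \<rho>: "0 \<le> \<rho>" "\<rho> < 1"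
    and contraction: "\<And>k u. k \<in> {1..m} \<Longrightarrow> u \<in> {u. ones \<bullet> u = 0} \<Longrightarrow>
      quad_form P (W k *v u) \<le> \<rho> * quad_form P u"
    using quad_form_common_contraction_on_subspace[where A = W,
        OF P subspace_hyperplane finite_atLeastAtMost decrease] by blast
  show ?thesis
    using eds contraction
    by (intro consensus_set_if_disagreement_contracts[OF P \<rho>]) (auto simp: eventually_doubly_stochastic_def)
qed

end
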